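(* Let $s,b\ge1$ and let $(a_n)$ be the $(s,b)$-Generacci sequence. Define $f$ on positive integers by $f(kb+j)=sb+j-1$ for $k\ge0$ and $j\in\{1,\dots,b\}$. Then for every integer $N\ge s$ and every $j\in\{2,\dots,b+1\}$, writing $n=j+Nb$, \[ a_n \;=\; a_{n-1}+a_{n-1-f(n-1)}, \qquad\text{i.e.}\qquad a_{j+Nb}=a_{j-1+Nb}+a_{1+(N-s)b}. \]
   Context: Fix integers $s,b\ge1$. For an increasing sequence of positive integers $(a_i)_{i\ge1}$, the bins are $\mathcal B_n=\{a_{b(n-1)+1},\dots,a_{bn}\}$ for $n\ge1$, and $\mathcal B_n=\emptyset$ for $n\le 0$. An $(s,b)$-Generacci legal decomposition of a positive integer $m$ using this sequence is an expression $m=a_{\ell_1}+\cdots+a_{\ell_k}$ with $a_{\ell_1}>a_{\ell_2}>\cdots>a_{\ell_k}$ such that for all $i$ and all $j$, $\{a_{\ell_i},a_{\ell_{i+1}}\}\not\subset \mathcal B_{j-s}\cup\mathcal B_{j-s+1}\cup\cdots\cup\mathcal B_j$ (so no two summands lie in the same bin, and the bins containing any two summands have at least $s$ bins strictly between them). The $(s,b)$-Generacci sequence is the increasing sequence of positive integers $(a_i)_{i\ge1}$ in which each $a_i$ is the smallest positive integer that has no $(s,b)$-Generacci legal decomposition using only elements of $\{a_1,\dots,a_{i-1}\}$. *)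

theory Defs
  imports Main
begin

text \<open>Bins, indexed by integers: the bin number n (n >= 1) consists of the sequence
  positions b(n-1)+1, ..., bn; bins with n <= 0 are empty.\<close>
definition bin_idx :: "nat \<Rightarrow> int \<Rightarrow> nat set" where
  "bin_idx b n = (if n \<le> 0 then {} else {nat (int b * (n - 1)) + 1 .. nat (int b * n)})"

definition legal_decomp :: "nat \<Rightarrow> nat \<Rightarrow> (nat \<Rightarrow> nat) \<Rightarrow> nat \<Rightarrow> nat \<Rightarrow> nat list \<Rightarrow> bool" where
  "legal_decomp s b a i m ls \<longleftrightarrow>
     ls \<noteq> [] \<and> set ls \<subseteq> {1..<i} \<and>
     sorted_wrt (>) (map a ls) \<and>
     m = sum_list (map a ls) \<and>
     (\<forall>t. Suc t < length ls \<longrightarrow>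
        (\<forall>j::int. \<not> ({ls ! t, ls ! Suc t} \<subseteq> (\<Union>r\<in>{j - int s .. j}. bin_idx b r))))"

definition has_legal_decomp :: "nat \<Rightarrow> nat \<Rightarrow> (nat \<Rightarrow> nat) \<Rightarrow> nat \<Rightarrow> nat \<Rightarrow> bool" where
  "has_legal_decomp s b a i m \<longleftrightarrow> (\<exists>ls. legal_decomp s b a i m ls)"

text \<open>a is the (s,b)-Generacci sequence (indexed from 1; a 0 is irrelevant):
  each a_i is the least positive integer with no legal decomposition using a_1..a_(i-1).\<close>
definition is_generacci :: "nat \<Rightarrow> nat \<Rightarrow> (nat \<Rightarrow> nat) \<Rightarrow> bool" where
  "is_generacci s b a \<longleftrightarrow>
     (\<forall>i\<ge>1. a i = (LEAST m. 0 < m \<and> \<not> has_legal_decomp s b a i m))"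

text \<open>f(kb+j) = sb+j-1 for k >= 0, j in {1..b}.\<close>
definition gen_f :: "nat \<Rightarrow> nat \<Rightarrow> nat \<Rightarrow> nat" where
  "gen_f s b n = s * b + (n - 1) mod b"

end

theory Submission
  imports Defs
begin

text \<open>Let \<open>B(x) = (x - 1) div b + 1\<close> be the bin of position \<open>x\<close>. For a decreasing list of
  positions, legality says that each position lies more than \<open>s\<close> bins below its predecessor.
  Let \<open>g 1 = 1\<close> and \<open>g (m + 2) = g (m + 1) + g c\<close> with \<open>c = (m div b - s) b + 1\<close>, the first
  position of bin \<open>B(m + 1) - s\<close>; the positions below \<open>c\<close> are exactly those more than \<open>s\<close>
  bins below \<open>m + 1\<close>. Hence a legal sum with largest position \<open>p\<close> is smaller than
  \<open>g (p + 1)\<close>, and every \<open>0 < m' < g n\<close> is a legal sum of terms at positions below \<open>n\<close>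
  (greedily take \<open>g (n - 1)\<close> and decompose the remainder below \<open>c\<close>). So \<open>g n\<close> is the least
  number without a legal decomposition by earlier terms: the Generacci sequence is \<open>g\<close>, and
  the theorem is its recurrence at \<open>n = j + N b\<close>.\<close>

definition bin_of :: "nat \<Rightarrow> nat \<Rightarrow> nat" where
  "bin_of b x = (x - 1) div b + 1"

lemma bin_of_mono: "x \<le> y \<Longrightarrow> bin_of b x \<le> bin_of b y"
  unfolding bin_of_def by (simp add: div_le_mono)

lemma mem_bin_idx_iff:
  assumes "0 < b" "1 \<le> x"
  shows "x \<in> bin_idx b r \<longleftrightarrow> r = int (bin_of b x)"
proof (cases "r \<le> 0")
  case True
  then show ?thesis by (simp add: bin_idx_def bin_of_def)
next
  case False
  define k where "k = nat r"
  have k: "r = int k" "1 \<le> k"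
    using False by (auto simp: k_def)
  have "int b * (r - 1) = int ((k - 1) * b)"
    using k by (simp add: of_nat_diff algebra_simps)
  then have lo: "nat (int b * (r - 1)) = (k - 1) * b"
    by (simp only: nat_int)
  have hi: "nat (int b * r) = k * b"
    using k by (simp add: mult.commute flip: of_nat_mult)
  have "x \<in> bin_idx b r \<longleftrightarrow> (k - 1) * b \<le> x - 1 \<and> x - 1 < (k - 1 + 1) * b"
    using False assms(2) k(2) unfolding bin_idx_def lo hi by auto
  also have "\<dots> \<longleftrightarrow> k - 1 \<le> (x - 1) div b \<and> (x - 1) div b < k - 1 + 1"
    using assms(1) by (simp only: less_eq_div_iff_mult_less_eq div_less_iff_less_mult)
  also have "\<dots> \<longleftrightarrow> (x - 1) div b = k - 1"
    by linarith
  also have "\<dots> \<longleftrightarrow> r = int (bin_of b x)"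
    using k by (auto simp: bin_of_def)
  finally show ?thesis .
qed

lemma separated_bins_iff:
  assumes "0 < b" "1 \<le> y" "y \<le> x"
  shows "(\<forall>j::int. \<not> {x, y} \<subseteq> (\<Union>r\<in>{j - int s..j}. bin_idx b r))
    \<longleftrightarrow> bin_of b y + s < bin_of b x"
proof -
  have "z \<in> (\<Union>r\<in>{j - int s..j}. bin_idx b r)
      \<longleftrightarrow> j - int s \<le> int (bin_of b z) \<and> int (bin_of b z) \<le> j" if "1 \<le> z" for z j
    using mem_bin_idx_iff[OF assms(1) that] by auto
  moreover have "bin_of b y \<le> bin_of b x"
    using assms(3) by (rule bin_of_mono)
  ultimately show ?thesis
    using assms(2,3) by (auto dest: spec[of _ "int (bin_of b x)"])
qed

abbreviation bin_separated :: "nat \<Rightarrow> nat \<Rightarrow> nat list \<Rightarrow> bool" where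
  "bin_separated s b \<equiv> successively (\<lambda>x y. bin_of b y + s < bin_of b x)"

lemma bin_separated_sorted:
  assumes "bin_separated s b ls"
  shows "sorted_wrt (>) ls"
proof -
  have "successively (>) ls"
    using assms by (rule successively_mono) (meson bin_of_mono not_le add_lessD1 leD)
  then show ?thesis
    by (simp add: successively_conv_sorted_wrt transp_def)
qed

lemma div_minus_times_le: "(m div b - s) * b \<le> (m :: nat)"
proof -
  have "(m div b - s) * b \<le> m div b * b" by simp
  also have "\<dots> \<le> m" by simp
  finally show ?thesis .
qed

function generacci :: "nat \<Rightarrow> nat \<Rightarrow> nat \<Rightarrow> nat" where
  "generacci s b 0 = 0"
| "generacci s b (Suc 0) = 1"
| "generacci s b (Suc (Suc m)) = generacci s b (Suc m) + generacci s b ((m div b - s) * b + 1)"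
  by pat_completeness auto
termination
proof (relation "measure (\<lambda>(s, b, n). n)")
  show "((s, b, (m div b - s) * b + 1), s, b, Suc (Suc m)) \<in> measure (\<lambda>(s, b, n). n)"
    for s b m :: nat
    using div_minus_times_le[of m b s] by simp
qed auto

lemma generacci_pos: "1 \<le> n \<Longrightarrow> 1 \<le> generacci s b n"
  by (induction s b n rule: generacci.induct) auto

lemma generacci_strict_mono: "strict_mono (generacci s b)"
  unfolding strict_mono_Suc_iff
proof
  fix n
  show "generacci s b n < generacci s b (Suc n)"
    using generacci_pos[of "((n - 1) div b - s) * b + 1" s b] by (cases n) auto
qed

lemma generacci_mono: "x \<le> y \<Longrightarrow> generacci s b x \<le> generacci s b y"
  using generacci_strict_mono strict_mono_less_eq by blast

lemma less_recursion_index_iff: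
  assumes "0 < b" "1 \<le> q"
  shows "q < (m div b - s) * b + 1 \<longleftrightarrow> bin_of b q + s < bin_of b (Suc m)"
proof -
  have "q < (m div b - s) * b + 1 \<longleftrightarrow> q - 1 < (m div b - s) * b"
    using assms(2) by linarith
  also have "\<dots> \<longleftrightarrow> (q - 1) div b < m div b - s"
    using assms(1) by (simp add: div_less_iff_less_mult)
  also have "\<dots> \<longleftrightarrow> bin_of b q + s < bin_of b (Suc m)"
    by (auto simp: bin_of_def)
  finally show ?thesis .
qed

lemma sum_bin_separated_less:
  assumes "0 < b" "bin_separated s b (p # ps)" "set (p # ps) \<subseteq> {1..}"
  shows "sum_list (map (generacci s b) (p # ps)) < generacci s b (Suc p)"
  using assms(2,3)
proof (induction ps arbitrary: p)
  case Nil
  then show ?case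
    using generacci_strict_mono by (simp add: strict_mono_Suc_iff)
next
  case (Cons q ps)
  then obtain m where p: "p = Suc m" and q: "1 \<le> q" "bin_of b q + s < bin_of b (Suc m)"
    by (cases p) auto
  then have "Suc q \<le> (m div b - s) * b + 1"
    using less_recursion_index_iff[OF assms(1)] by (metis Suc_leI)
  moreover have "sum_list (map (generacci s b) (q # ps)) < generacci s b (Suc q)"
    using Cons by simp
  ultimately have "sum_list (map (generacci s b) (q # ps)) < generacci s b ((m div b - s) * b + 1)"
    using generacci_mono less_le_trans by blast
  then show ?case
    by (simp add: p)
qed

lemma bin_separated_decomp_exists:
  assumes "0 < b" "1 \<le> m" "m < generacci s b n"
  shows "\<exists>ls. ls \<noteq> [] \<and> set ls \<subseteq> {1..<n} \<and> bin_separated s b ls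
    \<and> sum_list (map (generacci s b) ls) = m"
  using assms(2,3)
proof (induction n arbitrary: m rule: less_induct)
  case (less n)
  have "2 \<le> n"
  proof (rule ccontr)
    assume "\<not> 2 \<le> n"
    then have "n = 0 \<or> n = 1" by linarith
    then show False using less.prems by auto
  qed
  then obtain k where n: "n = Suc (Suc k)"
    using add_2_eq_Suc le_Suc_ex by blast
  define c where "c = (k div b - s) * b + 1"
  have gn: "generacci s b n = generacci s b (Suc k) + generacci s b c"
    by (simp add: n c_def)
  have "c < n"
    using div_minus_times_le[of k b s] by (simp add: n c_def)
  consider "m < generacci s b (Suc k)" | "m = generacci s b (Suc k)" | "generacci s b (Suc k) < m"
    by linarith
  then show ?case
  proof cases
    case 1
    then show ?thesis
      using less.IH[of "Suc k" m] less.prems n by fastforce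
  next
    case 2
    then show ?thesis
      by (intro exI[of _ "[Suc k]"]) (simp add: n)
  next
    case 3
    then have "1 \<le> m - generacci s b (Suc k)" "m - generacci s b (Suc k) < generacci s b c"
      using less.prems gn by auto
    then obtain q ls where ls: "set (q # ls) \<subseteq> {1..<c}" "bin_separated s b (q # ls)"
      "sum_list (map (generacci s b) (q # ls)) = m - generacci s b (Suc k)"
      using less.IH[OF \<open>c < n\<close>] by (metis neq_Nil_conv)
    then have "bin_of b q + s < bin_of b (Suc k)"
      using less_recursion_index_iff[OF assms(1)] by (auto simp: c_def)
    with ls 3 \<open>c < n\<close> show ?thesis
      by (intro exI[of _ "Suc k # q # ls"]) (auto simp: n)
  qed
qed

lemma legal_decomp_iff_bin_separated:
  assumes "0 < b" and agree: "\<And>k. 1 \<le> k \<Longrightarrow> k < i \<Longrightarrow> a k = generacci s b k"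
  shows "legal_decomp s b a i m ls \<longleftrightarrow> ls \<noteq> [] \<and> set ls \<subseteq> {1..<i} \<and> bin_separated s b ls
    \<and> m = sum_list (map (generacci s b) ls)"
proof -
  have map_eq: "map a ls = map (generacci s b) ls" if "set ls \<subseteq> {1..<i}"
    using that agree by (intro map_cong) auto
  have sorted_iff: "sorted_wrt (>) (map (generacci s b) ls) \<longleftrightarrow> sorted_wrt (>) ls"
    by (simp add: sorted_wrt_map strict_mono_less[OF generacci_strict_mono])
  have adjacent_iff: "(\<forall>t. Suc t < length ls \<longrightarrow>
      (\<forall>j::int. \<not> {ls ! t, ls ! Suc t} \<subseteq> (\<Union>r\<in>{j - int s..j}. bin_idx b r)))
      \<longleftrightarrow> bin_separated s b ls"
    if sorted: "sorted_wrt (>) ls" and pos: "set ls \<subseteq> {1..<i}"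
  proof -
    have "1 \<le> ls ! Suc t" "ls ! Suc t \<le> ls ! t" if "Suc t < length ls" for t
    proof -
      show "1 \<le> ls ! Suc t"
        using pos nth_mem[OF that] by auto
      show "ls ! Suc t \<le> ls ! t"
        using sorted that by (simp add: sorted_wrt_iff_nth_less less_imp_le)
    qed
    then show ?thesis
      unfolding successively_conv_nth using separated_bins_iff[OF assms(1)] by simp
  qed
  show ?thesis
    unfolding legal_decomp_def using map_eq sorted_iff adjacent_iff bin_separated_sorted by metis
qed

lemma is_generacci_eq_generacci:
  assumes "0 < b" "is_generacci s b a" "1 \<le> i"
  shows "a i = generacci s b i"
  using assms(3)
proof (induction i rule: less_induct)
  case (less i)
  have agree: "\<And>k. 1 \<le> k \<Longrightarrow> k < i \<Longrightarrow> a k = generacci s b k"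
    using less.IH by blast
  have decomp_iff: "has_legal_decomp s b a i m \<longleftrightarrow> (\<exists>ls. ls \<noteq> [] \<and> set ls \<subseteq> {1..<i}
      \<and> bin_separated s b ls \<and> m = sum_list (map (generacci s b) ls))" for m
    unfolding has_legal_decomp_def
    using legal_decomp_iff_bin_separated[where a = a and i = i, OF assms(1) agree] by blast
  have "\<not> has_legal_decomp s b a i (generacci s b i)"
  proof
    assume "has_legal_decomp s b a i (generacci s b i)"
    then obtain p ps where ps: "set (p # ps) \<subseteq> {1..<i}" "bin_separated s b (p # ps)"
      "generacci s b i = sum_list (map (generacci s b) (p # ps))"
      unfolding decomp_iff by (metis neq_Nil_conv)
    have "set (p # ps) \<subseteq> {1..}"
      using ps(1) by auto
    then have "generacci s b i < generacci s b (Suc p)"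
      using sum_bin_separated_less[OF assms(1) ps(2)] ps(3) by simp
    moreover have "Suc p \<le> i"
      using ps by auto
    ultimately show False
      using generacci_mono leD by blast
  qed
  moreover have "has_legal_decomp s b a i m" if "0 < m" "m < generacci s b i" for m
    unfolding decomp_iff using bin_separated_decomp_exists[OF assms(1)] that by (metis Suc_leI One_nat_def)
  ultimately have "(LEAST m. 0 < m \<and> \<not> has_legal_decomp s b a i m) = generacci s b i"
    using generacci_pos[OF less.prems] by (intro Least_equality) (auto simp: not_less[symmetric])
  then show ?case
    using assms(2) less.prems unfolding is_generacci_def by auto
qed

lemma generacci_recurrence_in_bin:
  assumes "2 \<le> j" "j \<le> b + 1"
  shows "generacci s b (j + N * b) = generacci s b (j - 1 + N * b) + generacci s b (1 + (N - s) * b)"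
proof -
  define m where "m = j - 2 + N * b"
  have "j - 2 < b"
    using assms by linarith
  then have "m div b = N"
    by (simp add: m_def)
  then show ?thesis
    using generacci.simps(3)[of s b m] assms(1) by (simp add: m_def Suc_diff_Suc numeral_2_eq_2)
qed

lemma gen_f_index:
  assumes "s \<le> N" "2 \<le> j" "j \<le> b + 1"
  shows "j + N * b - 1 - gen_f s b (j + N * b - 1) = 1 + (N - s) * b"
proof -
  have "j - 2 < b"
    using assms(2,3) by linarith
  then have "(j - 2 + N * b) mod b = j - 2"
    by simp
  moreover have "j + N * b - 1 - 1 = j - 2 + N * b"
    using assms(2) by linarith
  ultimately have "gen_f s b (j + N * b - 1) = s * b + (j - 2)"
    by (simp only: gen_f_def)
  moreover have "s * b \<le> N * b" "(N - s) * b = N * b - s * b"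
    using assms(1) by (simp_all add: diff_mult_distrib)
  ultimately show ?thesis
    using assms(2) by linarith
qed

theorem mainTheorem2:
  fixes s b N j :: nat and a :: "nat \<Rightarrow> nat"
  assumes "s \<ge> 1" and "b \<ge> 1" and "is_generacci s b a"
    and "N \<ge> s" and "2 \<le> j" and "j \<le> b + 1"
  shows "a (j + N * b) = a (j + N * b - 1) + a (j + N * b - 1 - gen_f s b (j + N * b - 1))
       \<and> a (j + N * b) = a (j - 1 + N * b) + a (1 + (N - s) * b)"
proof -
  have a_eq: "a k = generacci s b k" if "1 \<le> k" for k
    using is_generacci_eq_generacci assms(2,3) that by simp
  have "j + N * b - 1 = j - 1 + N * b"
    using assms(5) by simp
  then show ?thesis
    using generacci_recurrence_in_bin[OF assms(5,6)] gen_f_index[OF assms(4,5,6)] assms(5)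
    by (simp add: a_eq)
qed

end
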